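(* Let $\mathcal{F}^*$ be one of $\mathcal{F}^c,\mathcal{F}^{ev},\mathcal{F}^o$, let $\kappa_0=\kappa(H_0,\lambda_0,\alpha_0)$ and $\kappa_1=\kappa(H_1,\lambda_1,\alpha_1)$ be nondegenerate quadratic functions in $\mathcal{F}^*$, and let $\theta:\mathrm{Cok}(\hat\lambda_0)\to\mathrm{Cok}(\hat\lambda_1)$ be an isometry of the induced quadratic linking families. Let $H=\{(x_0,x_1)\in H_0^*\oplus H_1^*:\theta([x_0])=[x_1]\}$ and define $\lambda:H\times H\to\mathbb{Q}$ by $\lambda((x_0,x_1),(y_0,y_1))=\lambda_0^{-1}(x_0,y_0)-\lambda_1^{-1}(x_1,y_1)$. Then: 1. $\lambda$ is a nonsingular integral symmetric bilinear form on the free abelian group $H$; 2. the map $H_0\oplus H_1\to H$, $(v_0,v_1)\mapsto(\hat\lambda_0(v_0),-\hat\lambda_1(v_1))$, is an isometric embedding of $\lambda_0\oplus(-\lambda_1)$ into $\lambda$; 3. $(\alpha_0,\alpha_1)\in H$; 4. with $\alpha:=\hat\lambda((\alpha_0,\alpha_1))$, the quadratic function $\kappa_0\cup_\theta\kappa_1^-:=\kappa(H,\lambda,\alpha)$ belongs to $\mathcal{F}^*$; 5. the map in 2 is an isometric embedding $\kappa_0\oplus\kappa_1^-\to\kappa_0\cup_\theta\kappa_1^-$.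
   Context: A quadratic function $\kappa(H,\lambda,\alpha)$: $H$ finitely generated free abelian, $\lambda$ symmetric bilinear into $\mathbb{Z}$, $\alpha\in H^*=\mathrm{Hom}(H,\mathbb{Z})$, $\kappa(v)=\lambda(v,v)+\alpha(v)$, adjoint $\hat\lambda:H\to H^*$; nondegenerate if $\hat\lambda$ injective, nonsingular if bijective; $\kappa^-=\kappa(H,-\lambda,\alpha)$. Families: $\mathcal{F}^c$ characteristic ($\lambda(v,v)+\alpha(v)$ even $\forall v$); $\mathcal{F}^{ev}$ with $\lambda$ even; $\mathcal{F}^o$ with $\lambda$ even and $\alpha=0$. For nondegenerate $\kappa_i$: $[x]$ denotes the class of $x\in H_i^*$ in the finite group $\mathrm{Cok}\,\hat\lambda_i$; $\lambda_i^{-1}(x,y)=y(v)/r$ where $rx=\hat\lambda_i(v)$, $r\ne0$; $q^{ev}(\kappa_i)([x])=\frac12\lambda_i^{-1}(x,x)\bmod\mathbb{Z}$ (used for $\mathcal{F}^{ev},\mathcal{F}^o$) and $q^c(\kappa_i)([x])=\frac12(\lambda_i^{-1}(x,x)+\lambda_i^{-1}(x,\alpha_i))\bmod\mathbb{Z}$ (for $\mathcal{F}^c$). An isometry of the induced quadratic linking families is a group isomorphism $\theta$ with $\theta([\alpha_0])=[\alpha_1]$ and $q^*(\kappa_1)\circ\theta=q^*(\kappa_0)$. Isometric embedding: injective homomorphism preserving the (quadratic or bilinear) forms. *)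

theory Defs
  imports Complex_Main
begin

text \<open>A finitely generated free abelian group of rank n is modelled as
  Z^n = vecs n (integer functions on nat supported in {..<n}); its dual Hom(Z^n,Z) is
  identified with Z^n via the standard pairing dot. A symmetric bilinear form is an
  integer matrix L (function nat => nat => int, only entries i,j < n matter).\<close>

datatype family = Fc | Fev | Fo

definition vecs :: "nat \<Rightarrow> (nat \<Rightarrow> int) set" where
  "vecs n = {v. \<forall>i\<ge>n. v i = 0}"

definition dot :: "nat \<Rightarrow> (nat \<Rightarrow> int) \<Rightarrow> (nat \<Rightarrow> int) \<Rightarrow> int" where
  "dot n x v = (\<Sum>i<n. x i * v i)"

definition bil :: "nat \<Rightarrow> (nat \<Rightarrow> nat \<Rightarrow> int) \<Rightarrow> (nat \<Rightarrow> int) \<Rightarrow> (nat \<Rightarrow> int) \<Rightarrow> int" where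
  "bil n L v w = (\<Sum>i<n. \<Sum>j<n. v i * L i j * w j)"

text \<open>adjoint lambda-hat : H -> H^*, as a vector under the identification above\<close>
definition adj :: "nat \<Rightarrow> (nat \<Rightarrow> nat \<Rightarrow> int) \<Rightarrow> (nat \<Rightarrow> int) \<Rightarrow> (nat \<Rightarrow> int)" where
  "adj n L v = (\<lambda>i. if i < n then (\<Sum>j<n. L i j * v j) else 0)"

definition symm :: "nat \<Rightarrow> (nat \<Rightarrow> nat \<Rightarrow> int) \<Rightarrow> bool" where
  "symm n L \<longleftrightarrow> (\<forall>i<n. \<forall>j<n. L i j = L j i)"

definition quadfun :: "nat \<Rightarrow> (nat \<Rightarrow> nat \<Rightarrow> int) \<Rightarrow> (nat \<Rightarrow> int) \<Rightarrow> bool" where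
  "quadfun n L a \<longleftrightarrow> symm n L \<and> a \<in> vecs n"

definition nondeg :: "nat \<Rightarrow> (nat \<Rightarrow> nat \<Rightarrow> int) \<Rightarrow> bool" where
  "nondeg n L \<longleftrightarrow> inj_on (adj n L) (vecs n)"

definition in_fam :: "family \<Rightarrow> nat \<Rightarrow> (nat \<Rightarrow> nat \<Rightarrow> int) \<Rightarrow> (nat \<Rightarrow> int) \<Rightarrow> bool" where
  "in_fam F n L a \<longleftrightarrow>
     (case F of
        Fc \<Rightarrow> (\<forall>v\<in>vecs n. even (bil n L v v + dot n a v))
      | Fev \<Rightarrow> (\<forall>v\<in>vecs n. even (bil n L v v))
      | Fo \<Rightarrow> (\<forall>v\<in>vecs n. even (bil n L v v)) \<and> (\<forall>i. a i = 0))"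

definition cls :: "nat \<Rightarrow> (nat \<Rightarrow> nat \<Rightarrow> int) \<Rightarrow> (nat \<Rightarrow> int) \<Rightarrow> (nat \<Rightarrow> int) set" where
  "cls n L x = {y. \<exists>v\<in>vecs n. y = (\<lambda>i. x i + adj n L v i)}"

definition Cok :: "nat \<Rightarrow> (nat \<Rightarrow> nat \<Rightarrow> int) \<Rightarrow> (nat \<Rightarrow> int) set set" where
  "Cok n L = cls n L ` vecs n"

definition linv :: "nat \<Rightarrow> (nat \<Rightarrow> nat \<Rightarrow> int) \<Rightarrow> (nat \<Rightarrow> int) \<Rightarrow> (nat \<Rightarrow> int) \<Rightarrow> rat" where
  "linv n L x y = (SOME q. \<exists>r v. r \<noteq> 0 \<and> v \<in> vecs n \<and> (\<lambda>i. r * x i) = adj n L v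
                                 \<and> q = of_int (dot n y v) / of_int r)"

text \<open>values in Q/Z are represented by their fractional part in [0,1)\<close>
definition qev :: "nat \<Rightarrow> (nat \<Rightarrow> nat \<Rightarrow> int) \<Rightarrow> (nat \<Rightarrow> int) \<Rightarrow> rat" where
  "qev n L x = frac (linv n L x x / 2)"

definition qc :: "nat \<Rightarrow> (nat \<Rightarrow> nat \<Rightarrow> int) \<Rightarrow> (nat \<Rightarrow> int) \<Rightarrow> (nat \<Rightarrow> int) \<Rightarrow> rat" where
  "qc n L a x = frac ((linv n L x x + linv n L x a) / 2)"

definition qstar :: "family \<Rightarrow> nat \<Rightarrow> (nat \<Rightarrow> nat \<Rightarrow> int) \<Rightarrow> (nat \<Rightarrow> int) \<Rightarrow> (nat \<Rightarrow> int) set \<Rightarrow> rat" where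
  "qstar F n L a c = (let x = (SOME x. x \<in> c) in if F = Fc then qc n L a x else qev n L x)"

text \<open>isometry of the induced quadratic linking families: group isomorphism
  Cok_0 -> Cok_1 (addition of classes = Minkowski sum of cosets) with
  theta([alpha_0]) = [alpha_1] and q^*(kappa_1) o theta = q^*(kappa_0)\<close>
definition linking_iso ::
  "family \<Rightarrow> nat \<Rightarrow> (nat \<Rightarrow> nat \<Rightarrow> int) \<Rightarrow> (nat \<Rightarrow> int) \<Rightarrow> nat \<Rightarrow> (nat \<Rightarrow> nat \<Rightarrow> int) \<Rightarrow> (nat \<Rightarrow> int)
     \<Rightarrow> ((nat \<Rightarrow> int) set \<Rightarrow> (nat \<Rightarrow> int) set) \<Rightarrow> bool" where
  "linking_iso F n0 L0 a0 n1 L1 a1 \<theta> \<longleftrightarrow>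
     bij_betw \<theta> (Cok n0 L0) (Cok n1 L1)
   \<and> (\<forall>x\<in>vecs n0. \<forall>y\<in>vecs n0.
        \<theta> (cls n0 L0 (\<lambda>i. x i + y i)) = {(\<lambda>i. u i + w i) | u w. u \<in> \<theta> (cls n0 L0 x) \<and> w \<in> \<theta> (cls n0 L0 y)})
   \<and> \<theta> (cls n0 L0 a0) = cls n1 L1 a1
   \<and> (\<forall>c\<in>Cok n0 L0. qstar F n1 L1 a1 (\<theta> c) = qstar F n0 L0 a0 c)"

type_synonym pvec = "(nat \<Rightarrow> int) \<times> (nat \<Rightarrow> int)"

definition padd :: "pvec \<Rightarrow> pvec \<Rightarrow> pvec" where
  "padd p q = ((\<lambda>i. fst p i + fst q i), (\<lambda>i. snd p i + snd q i))"

definition pneg :: "pvec \<Rightarrow> pvec" where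
  "pneg p = ((\<lambda>i. - fst p i), (\<lambda>i. - snd p i))"

definition glueH ::
  "nat \<Rightarrow> (nat \<Rightarrow> nat \<Rightarrow> int) \<Rightarrow> nat \<Rightarrow> (nat \<Rightarrow> nat \<Rightarrow> int)
     \<Rightarrow> ((nat \<Rightarrow> int) set \<Rightarrow> (nat \<Rightarrow> int) set) \<Rightarrow> pvec set" where
  "glueH n0 L0 n1 L1 \<theta> = {(x0, x1). x0 \<in> vecs n0 \<and> x1 \<in> vecs n1 \<and> \<theta> (cls n0 L0 x0) = cls n1 L1 x1}"

definition glue_lam ::
  "nat \<Rightarrow> (nat \<Rightarrow> nat \<Rightarrow> int) \<Rightarrow> nat \<Rightarrow> (nat \<Rightarrow> nat \<Rightarrow> int) \<Rightarrow> pvec \<Rightarrow> pvec \<Rightarrow> rat" where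
  "glue_lam n0 L0 n1 L1 x y = linv n0 L0 (fst x) (fst y) - linv n1 L1 (snd x) (snd y)"

definition emb :: "nat \<Rightarrow> (nat \<Rightarrow> nat \<Rightarrow> int) \<Rightarrow> nat \<Rightarrow> (nat \<Rightarrow> nat \<Rightarrow> int) \<Rightarrow> pvec \<Rightarrow> pvec" where
  "emb n0 L0 n1 L1 v = (adj n0 L0 (fst v), (\<lambda>i. - adj n1 L1 (snd v) i))"

definition free_fg :: "pvec set \<Rightarrow> bool" where
  "free_fg H \<longleftrightarrow> (\<exists>k b. (\<forall>i<k. b i \<in> H) \<and>
      (\<forall>h\<in>H. \<exists>!c::nat \<Rightarrow> int. (\<forall>i\<ge>k. c i = 0) \<and>
          h = ((\<lambda>j. \<Sum>i<k. c i * fst (b i) j), (\<lambda>j. \<Sum>i<k. c i * snd (b i) j))))"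

definition in_famQ :: "family \<Rightarrow> pvec set \<Rightarrow> (pvec \<Rightarrow> pvec \<Rightarrow> rat) \<Rightarrow> (pvec \<Rightarrow> rat) \<Rightarrow> bool" where
  "in_famQ F H lam alpha \<longleftrightarrow>
     (case F of
        Fc \<Rightarrow> (\<forall>v\<in>H. (lam v v + alpha v) / 2 \<in> \<int>)
      | Fev \<Rightarrow> (\<forall>v\<in>H. lam v v / 2 \<in> \<int>)
      | Fo \<Rightarrow> (\<forall>v\<in>H. lam v v / 2 \<in> \<int>) \<and> (\<forall>v\<in>H. alpha v = 0))"

end

theory Submission
  imports Defs Jordan_Normal_Form.Determinant
begin

text \<open>For p = (x0, x1) in H the rational number Q0(x0) - Q1(x1), where Qi lifts the quadratic
  refinement q(kappa_i) to Q, is an integer because theta is an isometry; lambda is the polarisation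
  of this integer-valued function, hence integral. A homomorphism f : H -> Z is determined by
  its values on the image of H0 + H1, a subgroup of finite index on which it is given by pairing
  with some (x0, x1) in H0^* + H1^*; integrality of lambda((x0, x1), -) on all of H together with
  the surjectivity of theta then forces theta [x0] = [x1]. Finally H is free, being a subgroup
  of Z^(n0 + n1).\<close>

section \<open>Integer vectors and bilinear forms\<close>

definition std_basis :: "nat \<Rightarrow> nat \<Rightarrow> int" where
  "std_basis j = (\<lambda>i. of_bool (i = j))"

lemma zero_in_vecs [simp]: "(\<lambda>i. 0) \<in> vecs n"
  by (simp add: vecs_def)

lemma add_in_vecs [simp]: "x \<in> vecs n \<Longrightarrow> y \<in> vecs n \<Longrightarrow> (\<lambda>i. x i + y i) \<in> vecs n"
  by (simp add: vecs_def)

lemma diff_in_vecs [simp]: "x \<in> vecs n \<Longrightarrow> y \<in> vecs n \<Longrightarrow> (\<lambda>i. x i - y i) \<in> vecs n"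
  by (simp add: vecs_def)

lemma uminus_in_vecs [simp]: "x \<in> vecs n \<Longrightarrow> (\<lambda>i. - x i) \<in> vecs n"
  by (simp add: vecs_def)

lemma smult_in_vecs [simp]: "x \<in> vecs n \<Longrightarrow> (\<lambda>i. c * x i) \<in> vecs n"
  by (simp add: vecs_def)

lemma std_basis_in_vecs [simp]: "j < n \<Longrightarrow> std_basis j \<in> vecs n"
  by (simp add: vecs_def std_basis_def)

lemma adj_in_vecs [simp]: "adj n L v \<in> vecs n"
  by (simp add: adj_def vecs_def)

lemma dot_add_left: "dot n (\<lambda>i. x i + y i) v = dot n x v + dot n y v"
  by (simp add: dot_def algebra_simps sum.distrib)

lemma dot_add_right: "dot n x (\<lambda>i. v i + w i) = dot n x v + dot n x w"
  by (simp add: dot_def algebra_simps sum.distrib)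

lemma dot_smult_left: "dot n (\<lambda>i. c * x i) v = c * dot n x v"
  by (simp add: dot_def algebra_simps sum_distrib_left)

lemma dot_smult_right: "dot n x (\<lambda>i. c * v i) = c * dot n x v"
  by (simp add: dot_def algebra_simps sum_distrib_left)

lemma dot_uminus_left: "dot n (\<lambda>i. - x i) v = - dot n x v"
  by (simp add: dot_def sum_negf)

lemma dot_zero_right [simp]: "dot n x (\<lambda>i. 0) = 0"
  by (simp add: dot_def)

lemma dot_std_basis_left: "j < n \<Longrightarrow> dot n (std_basis j) v = v j"
  by (simp add: dot_def std_basis_def)

lemma dot_std_basis_right: "j < n \<Longrightarrow> dot n v (std_basis j) = v j"
  by (simp add: dot_def std_basis_def Collect_conj_eq)

lemma adj_zero [simp]: "adj n L (\<lambda>i. 0) = (\<lambda>i. 0)"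
  by (simp add: adj_def fun_eq_iff)

lemma adj_add: "adj n L (\<lambda>i. v i + w i) = (\<lambda>i. adj n L v i + adj n L w i)"
  by (simp add: adj_def fun_eq_iff algebra_simps sum.distrib)

lemma adj_smult: "adj n L (\<lambda>i. c * v i) = (\<lambda>i. c * adj n L v i)"
  by (simp add: adj_def fun_eq_iff algebra_simps sum_distrib_left)

lemma adj_uminus: "adj n L (\<lambda>i. - v i) = (\<lambda>i. - adj n L v i)"
  by (simp add: adj_def fun_eq_iff sum_negf)

lemma adj_diff: "adj n L (\<lambda>i. v i - w i) = (\<lambda>i. adj n L v i - adj n L w i)"
  by (simp add: adj_def fun_eq_iff sum_subtractf algebra_simps)

lemma bil_eq_dot_adj: "bil n L v w = dot n (adj n L w) v"
  by (simp add: bil_def dot_def adj_def sum_distrib_left algebra_simps)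

lemma dot_adj_commute:
  assumes "symm n L"
  shows "dot n (adj n L v) w = dot n (adj n L w) v"
proof -
  have "dot n (adj n L v) w = (\<Sum>i<n. \<Sum>j<n. L i j * v j * w i)"
    by (simp add: dot_def adj_def sum_distrib_right)
  also have "\<dots> = (\<Sum>j<n. \<Sum>i<n. L i j * v j * w i)"
    by (rule sum.swap)
  also have "\<dots> = (\<Sum>j<n. \<Sum>i<n. L j i * w i * v j)"
    using assms unfolding symm_def by (intro sum.cong refl) (auto simp: algebra_simps)
  also have "\<dots> = dot n (adj n L w) v"
    by (simp add: dot_def adj_def sum_distrib_right)
  finally show ?thesis .
qed

lemma additive_on_vecs_zero:
  fixes g :: "(nat \<Rightarrow> int) \<Rightarrow> int"
  assumes add: "\<And>v w. v \<in> vecs n \<Longrightarrow> w \<in> vecs n \<Longrightarrow> g (\<lambda>i. v i + w i) = g v + g w"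
  shows "g (\<lambda>i. 0) = 0"
proof -
  have "g (\<lambda>i. 0) = g (\<lambda>i. 0) + g (\<lambda>i. 0)"
    using add[of "\<lambda>i. 0" "\<lambda>i. 0"] by simp
  then show ?thesis
    by linarith
qed

lemma additive_on_vecs_smult:
  fixes g :: "(nat \<Rightarrow> int) \<Rightarrow> int"
  assumes add: "\<And>v w. v \<in> vecs n \<Longrightarrow> w \<in> vecs n \<Longrightarrow> g (\<lambda>i. v i + w i) = g v + g w"
    and v: "v \<in> vecs n"
  shows "g (\<lambda>i. c * v i) = c * g v"
proof -
  note zero = additive_on_vecs_zero[where g = g, OF add]
  have nat_smult: "g (\<lambda>i. int k * v i) = int k * g v" for k
  proof (induction k)
    case 0
    then show ?case using zero by simp
  next
    case (Suc k)
    have "g (\<lambda>i. int (Suc k) * v i) = g (\<lambda>i. int k * v i + v i)"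
      by (simp add: algebra_simps)
    also have "\<dots> = g (\<lambda>i. int k * v i) + g v"
      using v by (intro add) simp_all
    also have "\<dots> = int (Suc k) * g v"
      using Suc.IH by (simp add: algebra_simps)
    finally show ?case .
  qed
  show ?thesis
  proof (cases "c \<ge> 0")
    case True
    then show ?thesis using nat_smult[of "nat c"] by simp
  next
    case False
    define u where "u = (\<lambda>i. int (nat (- c)) * v i)"
    have "g u + g (\<lambda>i. - u i) = g (\<lambda>i. u i + - u i)"
      using v by (intro add[symmetric]) (simp_all add: u_def)
    then have "g (\<lambda>i. - u i) = - g u"
      using zero by simp
    have "g (\<lambda>i. c * v i) = g (\<lambda>i. - u i)"
      using False by (simp add: u_def)
    also have "\<dots> = - g u"
      by fact
    also have "\<dots> = c * g v"
      using nat_smult[of "nat (- c)"] False by (simp add: u_def)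
    finally show ?thesis .
  qed
qed

definition dual_vec :: "nat \<Rightarrow> ((nat \<Rightarrow> int) \<Rightarrow> int) \<Rightarrow> nat \<Rightarrow> int" where
  "dual_vec n g = (\<lambda>j. if j < n then g (std_basis j) else 0)"

lemma dual_vec_in_vecs [simp]: "dual_vec n g \<in> vecs n"
  by (simp add: dual_vec_def vecs_def)

lemma additive_on_vecs_eq_dot:
  fixes g :: "(nat \<Rightarrow> int) \<Rightarrow> int"
  assumes add: "\<And>v w. v \<in> vecs n \<Longrightarrow> w \<in> vecs n \<Longrightarrow> g (\<lambda>i. v i + w i) = g v + g w"
    and v: "v \<in> vecs n"
  shows "g v = dot n (dual_vec n g) v"
proof -
  have "g v = (\<Sum>j<m. v j * g (std_basis j))" if "m \<le> n" "v \<in> vecs m" for m v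
    using that
  proof (induction m arbitrary: v)
    case 0
    then have "v = (\<lambda>i. 0)"
      by (simp add: vecs_def fun_eq_iff)
    then show ?case
      using additive_on_vecs_zero[where g = g, OF add] by simp
  next
    case (Suc m)
    define v' where "v' = v(m := 0)"
    have v': "v' \<in> vecs m" "v' \<in> vecs n"
      using Suc.prems by (auto simp: v'_def vecs_def)
    have m: "std_basis m \<in> vecs n"
      using Suc.prems(1) by simp
    have "g v = g (\<lambda>i. v' i + v m * std_basis m i)"
      by (rule arg_cong[where f = g]) (auto simp: v'_def std_basis_def fun_eq_iff)
    also have "\<dots> = g v' + g (\<lambda>i. v m * std_basis m i)"
      using v'(2) m by (simp add: add)
    also have "g (\<lambda>i. v m * std_basis m i) = v m * g (std_basis m)"
      by (rule additive_on_vecs_smult[where g = g, OF add m])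
    also have "g v' = (\<Sum>j<m. v' j * g (std_basis j))"
      using Suc.IH[OF _ v'(1)] Suc.prems(1) by simp
    also have "\<dots> = (\<Sum>j<m. v j * g (std_basis j))"
      by (intro sum.cong) (auto simp: v'_def)
    finally show ?case
      by simp
  qed
  then show ?thesis
    using v by (simp add: dot_def dual_vec_def mult.commute)
qed

section \<open>Nondegenerate forms and the inverse form\<close>

lemma nondeg_adj_eqD:
  "nondeg n L \<Longrightarrow> adj n L v = adj n L w \<Longrightarrow> v \<in> vecs n \<Longrightarrow> w \<in> vecs n \<Longrightarrow> v = w"
  unfolding nondeg_def by (rule inj_onD)

definition form_mat :: "nat \<Rightarrow> (nat \<Rightarrow> nat \<Rightarrow> int) \<Rightarrow> int mat" where
  "form_mat n L = mat n n (\<lambda>(i, j). L i j)"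

lemma form_mat_carrier [simp]: "form_mat n L \<in> carrier_mat n n"
  by (simp add: form_mat_def)

lemma form_mat_mult_vec: "form_mat n L *\<^sub>v vec n v = vec n (adj n L v)"
  by (rule eq_vecI) (auto simp: form_mat_def adj_def scalar_prod_def row_def lessThan_atLeast0)

lemma vec_eq_imp_eq_on_vecs: "vec n x = vec n y \<Longrightarrow> x \<in> vecs n \<Longrightarrow> y \<in> vecs n \<Longrightarrow> x = y"
  by (auto simp: vec_eq_iff vecs_def fun_eq_iff) (metis not_le)

lemma nondeg_det_form_mat:
  assumes nd: "nondeg n L"
  shows "det (form_mat n L) \<noteq> 0"
proof
  assume "det (form_mat n L) = 0"
  then obtain w where w: "w \<in> carrier_vec n" "w \<noteq> 0\<^sub>v n" "form_mat n L *\<^sub>v w = 0\<^sub>v n"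
    using det_0_iff_vec_prod_zero[OF form_mat_carrier] by blast
  define v where "v = (\<lambda>i. if i < n then w $ i else 0)"
  have vw: "vec n v = w"
    using w(1) by (auto simp: v_def)
  have "vec n (adj n L v) = vec n (adj n L (\<lambda>i. 0))"
    using w(3) by (simp add: vw flip: form_mat_mult_vec) auto
  then have "adj n L v = adj n L (\<lambda>i. 0)"
    by (rule vec_eq_imp_eq_on_vecs) simp_all
  then have "v = (\<lambda>i. 0)"
    by (rule nondeg_adj_eqD[OF nd]) (simp_all add: v_def vecs_def)
  then show False
    using vw w(2) by (simp add: zero_vec_def)
qed

lemma nondeg_smult_in_adj_range:
  assumes nd: "nondeg n L" and x: "x \<in> vecs n"
  obtains r v where "r \<noteq> 0" "v \<in> vecs n" "(\<lambda>i. r * x i) = adj n L v"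
proof -
  let ?A = "form_mat n L"
  define u where "u = adj_mat ?A *\<^sub>v vec n x"
  have u: "u \<in> carrier_vec n"
    unfolding u_def by (rule mult_mat_vec_carrier[OF adj_mat(1)[OF form_mat_carrier]]) simp
  define v where "v = (\<lambda>i. if i < n then u $ i else 0)"
  have v: "v \<in> vecs n" "vec n v = u"
    using u by (auto simp: v_def vecs_def)
  have "vec n (adj n L v) = ?A *\<^sub>v u"
    by (simp add: v flip: form_mat_mult_vec)
  also have "\<dots> = (?A * adj_mat ?A) *\<^sub>v vec n x"
    unfolding u_def
    by (rule assoc_mult_mat_vec[symmetric, OF form_mat_carrier adj_mat(1)[OF form_mat_carrier]]) simp
  also have "\<dots> = vec n (\<lambda>i. det ?A * x i)"
    by (rule eq_vecI) (auto simp: adj_mat(2)[OF form_mat_carrier] scalar_prod_def of_bool_def[symmetric]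
          mult.assoc simp flip: sum_distrib_left)
  finally have "(\<lambda>i. det ?A * x i) = adj n L v"
    by (rule vec_eq_imp_eq_on_vecs[symmetric]) (use x in simp_all)
  then show thesis
    using that nondeg_det_form_mat[OF nd] v(1) by blast
qed

lemma linv_eq:
  assumes nd: "nondeg n L" and r: "r \<noteq> 0" and v: "v \<in> vecs n"
    and rx: "(\<lambda>i. r * x i) = adj n L v"
  shows "linv n L x y = of_int (dot n y v) / of_int r"
proof -
  \<comment> \<open>By nondegeneracy every witness allowed in \<open>linv_def\<close> yields the same quotient.\<close>
  let ?P = "\<lambda>q. \<exists>r v. r \<noteq> 0 \<and> v \<in> vecs n \<and> (\<lambda>i. r * x i) = adj n L v
                      \<and> q = of_int (dot n y v) / (of_int r :: rat)"
  have "?P (linv n L x y)"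
    unfolding linv_def by (rule someI[of ?P]) (use r v rx in blast)
  then obtain r' v' where r': "r' \<noteq> 0" "v' \<in> vecs n" "(\<lambda>i. r' * x i) = adj n L v'"
    and q: "linv n L x y = of_int (dot n y v') / of_int r'"
    by blast
  have "adj n L (\<lambda>i. r' * v i) = adj n L (\<lambda>i. r * v' i)"
    unfolding adj_smult rx[symmetric] r'(3)[symmetric] by (simp add: algebra_simps)
  then have "(\<lambda>i. r' * v i) = (\<lambda>i. r * v' i)"
    by (rule nondeg_adj_eqD[OF nd]) (simp_all add: v r'(2))
  then have "r' * dot n y v = r * dot n y v'"
    by (metis dot_smult_right)
  then have "of_int (dot n y v') * of_int r = (of_int (dot n y v) * of_int r' :: rat)"
    by (metis mult.commute of_int_mult)
  then show ?thesis
    using r r'(1) by (simp add: q frac_eq_eq)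
qed

lemma linv_witness:
  assumes nd: "nondeg n L" and x: "x \<in> vecs n"
  obtains r v where "r \<noteq> 0" "v \<in> vecs n" "(\<lambda>i. r * x i) = adj n L v"
    and "\<And>y. linv n L x y = of_int (dot n y v) / of_int r"
  using nondeg_smult_in_adj_range[OF nd x] linv_eq[OF nd] by metis

lemma linv_add_left:
  assumes nd: "nondeg n L" and x: "x \<in> vecs n" and x': "x' \<in> vecs n"
  shows "linv n L (\<lambda>i. x i + x' i) y = linv n L x y + linv n L x' y"
proof -
  obtain r v where w: "r \<noteq> 0" "v \<in> vecs n" "(\<lambda>i. r * x i) = adj n L v"
    and lx: "\<And>y. linv n L x y = of_int (dot n y v) / of_int r"
    using linv_witness[OF nd x] by metis
  obtain r' v' where w': "r' \<noteq> 0" "v' \<in> vecs n" "(\<lambda>i. r' * x' i) = adj n L v'"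
    and lx': "\<And>y. linv n L x' y = of_int (dot n y v') / of_int r'"
    using linv_witness[OF nd x'] by metis
  have "(\<lambda>i. (r * r') * (x i + x' i)) = (\<lambda>i. r' * (r * x i) + r * (r' * x' i))"
    by (simp add: algebra_simps)
  also have "\<dots> = adj n L (\<lambda>i. r' * v i + r * v' i)"
    unfolding adj_add adj_smult w(3)[symmetric] w'(3)[symmetric] ..
  finally have rx: "(\<lambda>i. (r * r') * (x i + x' i)) = adj n L (\<lambda>i. r' * v i + r * v' i)" .
  have "linv n L (\<lambda>i. x i + x' i) y
      = of_int (dot n y (\<lambda>i. r' * v i + r * v' i)) / of_int (r * r')"
    by (rule linv_eq[OF nd _ _ rx]) (use w w' in simp_all)
  then show ?thesis
    using w(1) w'(1) by (simp add: lx lx' dot_add_right dot_smult_right field_simps)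
qed

lemma linv_diff_left:
  assumes nd: "nondeg n L" and x: "x \<in> vecs n" and x': "x' \<in> vecs n"
  shows "linv n L (\<lambda>i. x i - x' i) y = linv n L x y - linv n L x' y"
  using linv_add_left[OF nd diff_in_vecs[OF x x'] x', of y] by simp

lemma linv_add_right:
  assumes nd: "nondeg n L" and x: "x \<in> vecs n"
  shows "linv n L x (\<lambda>i. y i + y' i) = linv n L x y + linv n L x y'"
  by (rule linv_witness[OF nd x]) (simp add: dot_add_left add_divide_distrib)

lemma linv_smult_right:
  assumes nd: "nondeg n L" and x: "x \<in> vecs n"
  shows "linv n L x (\<lambda>i. c * y i) = of_int c * linv n L x y"
  by (rule linv_witness[OF nd x]) (simp add: dot_smult_left)

lemma linv_uminus_right:
  assumes nd: "nondeg n L" and x: "x \<in> vecs n"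
  shows "linv n L x (\<lambda>i. - y i) = - linv n L x y"
  by (rule linv_witness[OF nd x]) (simp add: dot_uminus_left)

lemma linv_zero_left: "nondeg n L \<Longrightarrow> linv n L (\<lambda>i. 0) y = 0"
  using linv_eq[of n L 1 "\<lambda>i. 0" "\<lambda>i. 0" y] by simp

lemma linv_adj_left: "nondeg n L \<Longrightarrow> v \<in> vecs n \<Longrightarrow> linv n L (adj n L v) y = of_int (dot n y v)"
  using linv_eq[of n L 1 v "adj n L v" y] by simp

lemma linv_adj_right:
  assumes nd: "nondeg n L" and s: "symm n L" and x: "x \<in> vecs n"
  shows "linv n L x (adj n L w) = of_int (dot n x w)"
proof -
  obtain r v where w: "r \<noteq> 0" "(\<lambda>i. r * x i) = adj n L v"
    and lx: "\<And>y. linv n L x y = of_int (dot n y v) / of_int r"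
    using linv_witness[OF nd x] by metis
  have "dot n (adj n L w) v = r * dot n x w"
    by (simp add: dot_adj_commute[OF s, of w] w(2)[symmetric] dot_smult_left)
  then show ?thesis
    using w(1) by (simp add: lx)
qed

lemma linv_commute:
  assumes nd: "nondeg n L" and s: "symm n L" and x: "x \<in> vecs n" and y: "y \<in> vecs n"
  shows "linv n L x y = linv n L y x"
proof -
  obtain r v where w: "r \<noteq> 0" "v \<in> vecs n" "(\<lambda>i. r * x i) = adj n L v"
    using nondeg_smult_in_adj_range[OF nd x] .
  have "of_int r * linv n L y x = linv n L y (adj n L v)"
    using linv_smult_right[OF nd y, of r x] w(3) by simp
  also have "\<dots> = of_int (dot n y v)"
    by (rule linv_adj_right[OF nd s y])
  also have "\<dots> = of_int r * linv n L x y"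
    using linv_eq[OF nd w] w(1) by simp
  finally show ?thesis
    using w(1) by simp
qed

lemma linv_Ints_imp_in_adj_range:
  assumes nd: "nondeg n L" and z: "z \<in> vecs n"
    and ints: "\<And>j. j < n \<Longrightarrow> linv n L z (std_basis j) \<in> \<int>"
  obtains u where "u \<in> vecs n" "z = adj n L u"
proof -
  obtain r v where w: "r \<noteq> 0" "v \<in> vecs n" "(\<lambda>i. r * z i) = adj n L v"
    and lz: "\<And>y. linv n L z y = of_int (dot n y v) / of_int r"
    using linv_witness[OF nd z] by metis
  have "r dvd v j" for j
  proof (cases "j < n")
    case True
    then have "of_int (v j) / of_int r \<in> (\<int> :: rat set)"
      using ints lz by (simp add: dot_std_basis_left)
    then obtain k where "of_int (v j) / of_int r = (of_int k :: rat)"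
      by (auto elim: Ints_cases)
    then have "v j = r * k"
      using w(1) by (simp add: field_simps flip: of_int_mult)
    then show ?thesis
      by simp
  next
    case False
    then show ?thesis
      using w(2) by (simp add: vecs_def)
  qed
  then have "(\<lambda>i. r * z i) = (\<lambda>i. r * adj n L (\<lambda>j. v j div r) i)"
    by (simp add: w(3) flip: adj_smult)
  then have "z = adj n L (\<lambda>j. v j div r)"
    using w(1) by (simp add: fun_eq_iff)
  moreover have "(\<lambda>j. v j div r) \<in> vecs n"
    using w(2) by (simp add: vecs_def)
  ultimately show thesis
    using that by blast
qed

section \<open>Cokernel classes and the quadratic refinements\<close>

lemma cls_self: "x \<in> cls n L x"
  unfolding cls_def by (rule CollectI, rule bexI[of _ "\<lambda>i. 0"]) auto

lemma cls_eq_iff: "cls n L x = cls n L y \<longleftrightarrow> (\<exists>u\<in>vecs n. y = (\<lambda>i. x i + adj n L u i))"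
proof
  assume "cls n L x = cls n L y"
  then have "y \<in> cls n L x"
    using cls_self[of y n L] by simp
  then show "\<exists>u\<in>vecs n. y = (\<lambda>i. x i + adj n L u i)"
    by (simp add: cls_def)
next
  assume "\<exists>u\<in>vecs n. y = (\<lambda>i. x i + adj n L u i)"
  then obtain u where u: "u \<in> vecs n" "y = (\<lambda>i. x i + adj n L u i)"
    by blast
  have "(\<lambda>i. x i + adj n L v i) \<in> cls n L y" if "v \<in> vecs n" for v
    unfolding cls_def using that u
    by (intro CollectI bexI[of _ "\<lambda>i. v i - u i"]) (auto simp: adj_diff)
  moreover have "(\<lambda>i. y i + adj n L v i) \<in> cls n L x" if "v \<in> vecs n" for v
    unfolding cls_def using that u
    by (intro CollectI bexI[of _ "\<lambda>i. u i + v i"]) (auto simp: adj_add add.assoc)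
  ultimately show "cls n L x = cls n L y"
    by (auto simp: cls_def[of n L x] cls_def[of n L y])
qed

lemma cls_add_cancel:
  assumes "cls n L (\<lambda>i. x i + y i) = cls n L (\<lambda>i. x i + z i)"
  shows "cls n L y = cls n L z"
proof -
  obtain u where "u \<in> vecs n" "(\<lambda>i. x i + z i) = (\<lambda>i. x i + y i + adj n L u i)"
    using assms unfolding cls_eq_iff by blast
  then show ?thesis
    unfolding cls_eq_iff by (auto simp: fun_eq_iff)
qed

lemma cls_add:
  "{(\<lambda>i. u i + w i) | u w. u \<in> cls n L x \<and> w \<in> cls n L y} = cls n L (\<lambda>i. x i + y i)"
proof (intro equalityI subsetI)
  fix z
  assume "z \<in> {(\<lambda>i. u i + w i) | u w. u \<in> cls n L x \<and> w \<in> cls n L y}"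
  then obtain v w where "v \<in> vecs n" "w \<in> vecs n"
    and "z = (\<lambda>i. (x i + adj n L v i) + (y i + adj n L w i))"
    unfolding cls_def by blast
  then show "z \<in> cls n L (\<lambda>i. x i + y i)"
    unfolding cls_def by (auto simp: adj_add algebra_simps intro!: bexI[of _ "\<lambda>i. v i + w i"])
next
  fix z
  assume "z \<in> cls n L (\<lambda>i. x i + y i)"
  then obtain v where "v \<in> vecs n" "z = (\<lambda>i. (x i + adj n L v i) + y i)"
    unfolding cls_def by (auto simp: algebra_simps)
  then show "z \<in> {(\<lambda>i. u i + w i) | u w. u \<in> cls n L x \<and> w \<in> cls n L y}"
    using cls_self[of y n L]
    by (intro CollectI exI[of _ "\<lambda>i. x i + adj n L v i"] exI[of _ y]) (auto simp: cls_def)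
qed

definition qlift :: "family \<Rightarrow> nat \<Rightarrow> (nat \<Rightarrow> nat \<Rightarrow> int) \<Rightarrow> (nat \<Rightarrow> int) \<Rightarrow> (nat \<Rightarrow> int) \<Rightarrow> rat" where
  "qlift F n L a x = (linv n L x x + (if F = Fc then linv n L x a else 0)) / 2"

lemma qlift_add:
  assumes nd: "nondeg n L" and s: "symm n L" and x: "x \<in> vecs n" and y: "y \<in> vecs n"
  shows "qlift F n L a (\<lambda>i. x i + y i) = qlift F n L a x + qlift F n L a y + linv n L x y"
  using x y linv_commute[OF nd s y x]
  by (simp add: qlift_def linv_add_left[OF nd] linv_add_right[OF nd] field_simps)

lemma qlift_adj_Ints:
  assumes nd: "nondeg n L" and f: "in_fam F n L a" and v: "v \<in> vecs n"
  shows "qlift F n L a (adj n L v) \<in> \<int>"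
proof -
  have "even (bil n L v v + (if F = Fc then dot n a v else 0))"
    using f v by (cases F) (auto simp: in_fam_def)
  then obtain k where k: "bil n L v v + (if F = Fc then dot n a v else 0) = 2 * k"
    by blast
  have "qlift F n L a (adj n L v) = of_int (bil n L v v + (if F = Fc then dot n a v else 0)) / 2"
    using v by (simp add: qlift_def linv_adj_left[OF nd] bil_eq_dot_adj)
  also have "\<dots> = of_int k"
    by (simp add: k)
  finally show ?thesis
    by simp
qed

lemma qlift_shift_Ints:
  assumes q: "quadfun n L a" and nd: "nondeg n L" and f: "in_fam F n L a"
    and x: "x \<in> vecs n" and v: "v \<in> vecs n"
  shows "qlift F n L a (\<lambda>i. x i + adj n L v i) - qlift F n L a x \<in> \<int>"
proof -
  have s: "symm n L"
    using q by (simp add: quadfun_def)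
  have "qlift F n L a (\<lambda>i. x i + adj n L v i) - qlift F n L a x
      = qlift F n L a (adj n L v) + of_int (dot n x v)"
    using qlift_add[OF nd s x adj_in_vecs] by (simp add: linv_adj_right[OF nd s x])
  then show ?thesis
    using qlift_adj_Ints[OF nd f v] by simp
qed

lemma qstar_cls:
  assumes q: "quadfun n L a" and nd: "nondeg n L" and f: "in_fam F n L a" and x: "x \<in> vecs n"
  shows "qstar F n L a (cls n L x) = frac (qlift F n L a x)"
proof -
  define x' where "x' = (SOME x'. x' \<in> cls n L x)"
  have "x' \<in> cls n L x"
    unfolding x'_def using cls_self[of x n L] by (rule someI[where P = "\<lambda>x'. x' \<in> cls n L x"])
  then obtain v where v: "v \<in> vecs n" "x' = (\<lambda>i. x i + adj n L v i)"
    by (auto simp: cls_def)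
  have "qstar F n L a (cls n L x) = frac (qlift F n L a x')"
    unfolding qstar_def x'_def[symmetric] by (simp add: qc_def qev_def qlift_def)
  also have "\<dots> = frac (qlift F n L a x)"
    using frac_add_int_right[OF qlift_shift_Ints[OF q nd f x v(1)], of "qlift F n L a x"]
    by (simp add: v(2))
  finally show ?thesis .
qed

section \<open>Subgroups of pairs of integer vectors are free\<close>

abbreviation pzero :: pvec where
  "pzero \<equiv> ((\<lambda>i. 0), (\<lambda>i. 0))"

definition psmult :: "int \<Rightarrow> pvec \<Rightarrow> pvec" where
  "psmult c p = ((\<lambda>i. c * fst p i), (\<lambda>i. c * snd p i))"

definition pgroup :: "pvec set \<Rightarrow> bool" where
  "pgroup G \<longleftrightarrow> pzero \<in> G \<and> (\<forall>x\<in>G. \<forall>y\<in>G. padd x y \<in> G) \<and> (\<forall>x\<in>G. pneg x \<in> G)"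

definition additive_on :: "pvec set \<Rightarrow> (pvec \<Rightarrow> int) \<Rightarrow> bool" where
  "additive_on G \<phi> \<longleftrightarrow> (\<forall>x\<in>G. \<forall>y\<in>G. \<phi> (padd x y) = \<phi> x + \<phi> y)"

lemma additive_on_pzero: "pgroup G \<Longrightarrow> additive_on G \<phi> \<Longrightarrow> \<phi> pzero = 0"
  using padd_def[of pzero pzero] by (auto simp: pgroup_def additive_on_def dest!: bspec[of _ _ pzero])

lemma additive_on_pneg:
  assumes G: "pgroup G" and \<phi>: "additive_on G \<phi>" and x: "x \<in> G"
  shows "\<phi> (pneg x) = - \<phi> x"
proof -
  have "\<phi> (padd x (pneg x)) = \<phi> x + \<phi> (pneg x)"
    using G \<phi> x by (simp add: additive_on_def pgroup_def)
  moreover have "padd x (pneg x) = pzero"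
    by (simp add: padd_def pneg_def)
  ultimately show ?thesis
    using additive_on_pzero[OF G \<phi>] by simp
qed

lemma psmult_uminus: "psmult (- c) x = pneg (psmult c x)"
  by (simp add: psmult_def pneg_def)

lemma psmult_Suc: "psmult (int (Suc k)) x = padd (psmult (int k) x) x"
  by (simp add: psmult_def padd_def algebra_simps)

lemma pgroup_psmult:
  assumes G: "pgroup G" and x: "x \<in> G"
  shows "psmult c x \<in> G"
proof -
  have nat_smult: "psmult (int k) x \<in> G" for k
  proof (induction k)
    case 0
    then show ?case
      using G by (simp add: psmult_def pgroup_def)
  next
    case (Suc k)
    then show ?case
      using G x unfolding psmult_Suc pgroup_def by blast
  qed
  show ?thesis
    using nat_smult[of "nat c"] nat_smult[of "nat (- c)"] psmult_uminus[of "int (nat (- c))" x] G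
    by (cases "c \<ge> 0") (auto simp: pgroup_def)
qed

lemma additive_on_psmult:
  assumes G: "pgroup G" and \<phi>: "additive_on G \<phi>" and x: "x \<in> G"
  shows "\<phi> (psmult c x) = c * \<phi> x"
proof -
  have nat_smult: "\<phi> (psmult (int k) x) = int k * \<phi> x" for k
  proof (induction k)
    case 0
    then show ?case
      using additive_on_pzero[OF G \<phi>] by (simp add: psmult_def)
  next
    case (Suc k)
    have "\<phi> (psmult (int (Suc k)) x) = \<phi> (psmult (int k) x) + \<phi> x"
      unfolding psmult_Suc using \<phi> x pgroup_psmult[OF G x] by (simp add: additive_on_def)
    then show ?case
      using Suc by (simp add: algebra_simps)
  qed
  show ?thesis
    using nat_smult[of "nat c"] nat_smult[of "nat (- c)"] psmult_uminus[of "int (nat (- c))" x]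
      additive_on_pneg[OF G \<phi> pgroup_psmult[OF G x]]
    by (cases "c \<ge> 0") auto
qed

lemma additive_on_subset: "additive_on G \<phi> \<Longrightarrow> G' \<subseteq> G \<Longrightarrow> additive_on G' \<phi>"
  by (auto simp: additive_on_def)

lemma pgroup_kernel:
  assumes G: "pgroup G" and \<phi>: "additive_on G \<phi>"
  shows "pgroup {h \<in> G. \<phi> h = 0}"
  using G \<phi> additive_on_pzero[OF G \<phi>] additive_on_pneg[OF G \<phi>]
  unfolding pgroup_def additive_on_def by auto

definition lin_comb :: "nat \<Rightarrow> (nat \<Rightarrow> int) \<Rightarrow> (nat \<Rightarrow> pvec) \<Rightarrow> pvec" where
  "lin_comb k c b = ((\<lambda>j. \<Sum>i<k. c i * fst (b i) j), (\<lambda>j. \<Sum>i<k. c i * snd (b i) j))"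

definition is_basis :: "pvec set \<Rightarrow> nat \<Rightarrow> (nat \<Rightarrow> pvec) \<Rightarrow> bool" where
  "is_basis G k b \<longleftrightarrow> (\<forall>i<k. b i \<in> G) \<and> (\<forall>h\<in>G. \<exists>!c. (\<forall>i\<ge>k. c i = 0) \<and> h = lin_comb k c b)"

lemma free_fg_iff_is_basis: "free_fg G \<longleftrightarrow> (\<exists>k b. is_basis G k b)"
  unfolding free_fg_def is_basis_def lin_comb_def ..

lemma lin_comb_0 [simp]: "lin_comb 0 c b = pzero"
  by (simp add: lin_comb_def)

lemma lin_comb_Suc: "lin_comb (Suc k) c b = padd (lin_comb k c b) (psmult (c k) (b k))"
  by (simp add: lin_comb_def padd_def psmult_def)

lemma lin_comb_cong:
  "(\<And>i. i < k \<Longrightarrow> c i = c' i) \<Longrightarrow> (\<And>i. i < k \<Longrightarrow> b i = b' i) \<Longrightarrow> lin_comb k c b = lin_comb k c' b'"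
  by (simp add: lin_comb_def)

lemma lin_comb_in_pgroup: "pgroup G \<Longrightarrow> (\<forall>i<k. b i \<in> G) \<Longrightarrow> lin_comb k c b \<in> G"
  by (induction k) (auto simp: lin_comb_Suc pgroup_def pgroup_psmult)

lemma additive_on_lin_comb:
  "pgroup G \<Longrightarrow> additive_on G \<phi> \<Longrightarrow> (\<forall>i<k. b i \<in> G) \<Longrightarrow> \<phi> (lin_comb k c b) = (\<Sum>i<k. c i * \<phi> (b i))"
proof (induction k)
  case 0
  then show ?case
    by (simp add: additive_on_pzero)
next
  case (Suc k)
  then show ?case
    using lin_comb_in_pgroup[of G k b c] pgroup_psmult[of G "b k" "c k"]
      additive_on_psmult[of G \<phi> "b k" "c k"]
    by (simp add: lin_comb_Suc additive_on_def)
qed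

lemma additive_on_generator:
  assumes G: "pgroup G" and \<phi>: "additive_on G \<phi>"
  obtains g where "g \<in> G" "\<And>h. h \<in> G \<Longrightarrow> \<phi> g dvd \<phi> h"
proof (cases "\<exists>h\<in>G. \<phi> h > 0")
  case False
  have "\<phi> h = 0" if h: "h \<in> G" for h
  proof -
    have "pneg h \<in> G"
      using G h by (simp add: pgroup_def)
    then have "\<not> \<phi> (pneg h) > 0" "\<not> \<phi> h > 0"
      using False h by auto
    then show ?thesis
      using additive_on_pneg[OF G \<phi> h] by simp
  qed
  moreover have "pzero \<in> G"
    using G by (simp add: pgroup_def)
  ultimately show thesis
    using that[of pzero] by simp
next
  case True
  then obtain h0 where "h0 \<in> G" "\<phi> h0 > 0"
    by blast
  then obtain g where g: "g \<in> G" "\<phi> g > 0"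
    and least_nat: "\<And>h. h \<in> G \<Longrightarrow> \<phi> h > 0 \<Longrightarrow> nat (\<phi> g) \<le> nat (\<phi> h)"
    using ex_has_least_nat[of "\<lambda>h. h \<in> G \<and> \<phi> h > 0" h0 "\<lambda>h. nat (\<phi> h)"] by blast
  have least: "\<phi> g \<le> \<phi> h" if "h \<in> G" "\<phi> h > 0" for h
    using least_nat[OF that] that(2) by (simp add: nat_le_eq_zle)
  have "\<phi> g dvd \<phi> h" if h: "h \<in> G" for h
  proof -
    define h' where "h' = padd h (psmult (- (\<phi> h div \<phi> g)) g)"
    have h': "h' \<in> G"
      using G h pgroup_psmult[OF G g(1)] unfolding h'_def pgroup_def by blast
    have "\<phi> h' = \<phi> h + \<phi> (psmult (- (\<phi> h div \<phi> g)) g)"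
      using \<phi> h pgroup_psmult[OF G g(1)] unfolding h'_def additive_on_def by blast
    also have "\<dots> = \<phi> h - (\<phi> h div \<phi> g) * \<phi> g"
      using additive_on_psmult[OF G \<phi> g(1)] by simp
    also have "\<dots> = \<phi> h mod \<phi> g"
      by (rule minus_div_mult_eq_mod)
    finally have \<phi>h': "\<phi> h' = \<phi> h mod \<phi> g" .
    have "\<phi> h mod \<phi> g = 0"
    proof (rule ccontr)
      assume "\<phi> h mod \<phi> g \<noteq> 0"
      then have "\<phi> g \<le> \<phi> h'"
        using least[OF h'] \<phi>h' pos_mod_sign[OF g(2), of "\<phi> h"] by simp
      then show False
        using \<phi>h' pos_mod_bound[OF g(2), of "\<phi> h"] by simp
    qed
    then show ?thesis
      by (simp add: dvd_eq_mod_eq_0)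
  qed
  then show thesis
    using that g(1) by blast
qed

lemma is_basis_in: "is_basis G k b \<Longrightarrow> i < k \<Longrightarrow> b i \<in> G"
  unfolding is_basis_def by blast

lemma is_basis_coeffs:
  assumes "is_basis G k b" and "h \<in> G"
  obtains c where "\<forall>i\<ge>k. c i = 0" "h = lin_comb k c b"
    and "\<And>c'. \<forall>i\<ge>k. c' i = 0 \<Longrightarrow> h = lin_comb k c' b \<Longrightarrow> c' = c"
proof -
  have "\<exists>!c. (\<forall>i\<ge>k. c i = 0) \<and> h = lin_comb k c b"
    using assms unfolding is_basis_def by blast
  then show thesis
    using that by blast
qed

lemma is_basis_pzero: "is_basis {pzero} 0 b"
proof -
  have "\<exists>!c. (\<forall>i\<ge>0. c i = 0) \<and> pzero = lin_comb 0 c b"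
    by (rule ex1I[of _ "\<lambda>i. 0"]) (auto simp: fun_eq_iff)
  then show ?thesis
    by (simp only: is_basis_def) simp
qed

lemma is_basis_extend:
  assumes G: "pgroup G" and \<phi>: "additive_on G \<phi>"
    and basis: "is_basis {h \<in> G. \<phi> h = 0} k b"
    and g: "g \<in> G" "\<phi> g \<noteq> 0" and dvd: "\<And>h. h \<in> G \<Longrightarrow> \<phi> g dvd \<phi> h"
  shows "is_basis G (Suc k) (b(k := g))"
proof -
  let ?b = "b(k := g)"
  have b: "\<forall>i<k. b i \<in> G" "\<forall>i<k. \<phi> (b i) = 0"
    using is_basis_in[OF basis] by auto
  have lin_comb_Suc_b: "lin_comb (Suc k) c ?b = padd (lin_comb k c b) (psmult (c k) g)" for c
    using lin_comb_cong[of k c c ?b b] by (simp add: lin_comb_Suc)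
  have \<phi>_lin_comb: "\<phi> (lin_comb (Suc k) c ?b) = c k * \<phi> g" for c
  proof -
    have "\<phi> (lin_comb (Suc k) c ?b) = \<phi> (lin_comb k c b) + \<phi> (psmult (c k) g)"
      unfolding lin_comb_Suc_b using \<phi> lin_comb_in_pgroup[OF G b(1)] pgroup_psmult[OF G g(1)]
      unfolding additive_on_def by blast
    then show ?thesis
      using additive_on_lin_comb[OF G \<phi> b(1)] b(2) additive_on_psmult[OF G \<phi> g(1)] by simp
  qed
  have "\<exists>!c. (\<forall>i\<ge>Suc k. c i = 0) \<and> h = lin_comb (Suc k) c ?b" if h: "h \<in> G" for h
  proof -
    obtain q where q: "\<phi> h = q * \<phi> g"
      using dvd[OF h] by (metis dvdE mult.commute)
    define h' where "h' = padd h (psmult (- q) g)"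
    have "h' \<in> G"
      using G h pgroup_psmult[OF G g(1)] unfolding h'_def pgroup_def by blast
    moreover have "\<phi> h' = 0"
      using \<phi> h pgroup_psmult[OF G g(1)] additive_on_psmult[OF G \<phi> g(1), of "- q"] q
      unfolding h'_def additive_on_def by simp
    ultimately have "h' \<in> {h \<in> G. \<phi> h = 0}"
      by simp
    then obtain c where c: "\<forall>i\<ge>k. c i = 0" "h' = lin_comb k c b"
      and c_unique: "\<And>c'. (\<forall>i\<ge>k. c' i = 0) \<Longrightarrow> h' = lin_comb k c' b \<Longrightarrow> c' = c"
      using is_basis_coeffs[OF basis] by blast
    have h_eq: "h = padd h' (psmult q g)"
      by (simp add: h'_def padd_def psmult_def)
    show ?thesis
    proof (rule ex1I[of _ "c(k := q)"])
      have "lin_comb k (c(k := q)) b = lin_comb k c b"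
        by (rule lin_comb_cong) auto
      then show "(\<forall>i\<ge>Suc k. (c(k := q)) i = 0) \<and> h = lin_comb (Suc k) (c(k := q)) ?b"
        using c by (simp add: lin_comb_Suc_b h_eq)
    next
      fix c'
      assume c': "(\<forall>i\<ge>Suc k. c' i = 0) \<and> h = lin_comb (Suc k) c' ?b"
      have "c' k * \<phi> g = q * \<phi> g"
        using \<phi>_lin_comb[of c'] c' q by simp
      then have c'k: "c' k = q"
        using g(2) by simp
      have "h' = lin_comb k c' b"
        using c' c'k by (simp add: h'_def lin_comb_Suc_b padd_def psmult_def)
      also have "\<dots> = lin_comb k (c'(k := 0)) b"
        by (rule lin_comb_cong) auto
      finally have "c'(k := 0) = c"
        using c' by (intro c_unique) auto
      then show "c' = c(k := q)"
        using c'k by (metis fun_upd_triv fun_upd_upd)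
    qed
  qed
  then show ?thesis
    using b(1) g(1) by (simp add: is_basis_def less_Suc_eq)
qed

lemma pgroup_free_fg:
  fixes \<phi> :: "nat \<Rightarrow> pvec \<Rightarrow> int" and m :: nat
  assumes "pgroup G" and "\<forall>j<m. additive_on G (\<phi> j)"
    and "\<forall>g\<in>G. (\<forall>j<m. \<phi> j g = 0) \<longrightarrow> g = pzero"
  shows "free_fg G"
  using assms
proof (induction m arbitrary: G)
  case 0
  have "pzero \<in> G"
    using "0.prems"(1) by (simp add: pgroup_def)
  moreover have "\<forall>g\<in>G. g = pzero"
    using "0.prems"(3) by simp
  ultimately have "G = {pzero}"
    by blast
  then show ?case
    using is_basis_pzero unfolding free_fg_iff_is_basis by metis
next
  case (Suc m)
  have G: "pgroup G" and \<phi>: "additive_on G (\<phi> m)"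
    using Suc.prems by auto
  let ?G' = "{h \<in> G. \<phi> m h = 0}"
  have "\<forall>j<m. additive_on ?G' (\<phi> j)"
    using Suc.prems(2) additive_on_subset[of G _ ?G'] by auto
  moreover have "\<forall>h\<in>?G'. (\<forall>j<m. \<phi> j h = 0) \<longrightarrow> h = pzero"
    using Suc.prems(3) by (auto simp: less_Suc_eq)
  ultimately have "free_fg ?G'"
    using pgroup_kernel[OF G \<phi>] by (intro Suc.IH)
  then obtain k b where basis: "is_basis ?G' k b"
    by (auto simp: free_fg_iff_is_basis)
  obtain g where g: "g \<in> G" and dvd: "\<And>h. h \<in> G \<Longrightarrow> \<phi> m g dvd \<phi> m h"
    using additive_on_generator[OF G \<phi>] by blast
  show ?case
  proof (cases "\<phi> m g = 0")
    case True
    then have "?G' = G"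
      using dvd by auto
    then show ?thesis
      using \<open>free_fg ?G'\<close> by simp
  next
    case False
    then show ?thesis
      using is_basis_extend[OF G \<phi> basis g False dvd] by (auto simp: free_fg_iff_is_basis)
  qed
qed

section \<open>The glued lattice\<close>

locale gluing =
  fixes F :: family
    and n0 :: nat and L0 :: "nat \<Rightarrow> nat \<Rightarrow> int" and a0 :: "nat \<Rightarrow> int"
    and n1 :: nat and L1 :: "nat \<Rightarrow> nat \<Rightarrow> int" and a1 :: "nat \<Rightarrow> int"
    and \<theta> :: "(nat \<Rightarrow> int) set \<Rightarrow> (nat \<Rightarrow> int) set"
  assumes q0: "quadfun n0 L0 a0" and q1: "quadfun n1 L1 a1"
    and nd0: "nondeg n0 L0" and nd1: "nondeg n1 L1"
    and f0: "in_fam F n0 L0 a0" and f1: "in_fam F n1 L1 a1"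
    and iso: "linking_iso F n0 L0 a0 n1 L1 a1 \<theta>"
begin

abbreviation H where "H \<equiv> glueH n0 L0 n1 L1 \<theta>"
abbreviation lam where "lam \<equiv> glue_lam n0 L0 n1 L1"
abbreviation e where "e \<equiv> emb n0 L0 n1 L1"

lemma symm0: "symm n0 L0" and symm1: "symm n1 L1"
  and a0_in_vecs: "a0 \<in> vecs n0" and a1_in_vecs: "a1 \<in> vecs n1"
  using q0 q1 by (auto simp: quadfun_def)

lemma mem_H: "p \<in> H \<longleftrightarrow> fst p \<in> vecs n0 \<and> snd p \<in> vecs n1 \<and> \<theta> (cls n0 L0 (fst p)) = cls n1 L1 (snd p)"
  by (cases p) (simp add: glueH_def)

lemma lam_eq: "lam p q = linv n0 L0 (fst p) (fst q) - linv n1 L1 (snd p) (snd q)"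
  by (simp add: glue_lam_def)

lemma emb_eq: "e v = (adj n0 L0 (fst v), \<lambda>i. - adj n1 L1 (snd v) i)"
  by (simp add: emb_def)

lemma theta_cls:
  assumes "x \<in> vecs n0"
  obtains z where "z \<in> vecs n1" "\<theta> (cls n0 L0 x) = cls n1 L1 z"
proof -
  have "\<theta> (cls n0 L0 x) \<in> Cok n1 L1"
    using iso assms unfolding linking_iso_def bij_betw_def Cok_def by auto
  then show thesis
    using that by (auto simp: Cok_def)
qed

lemma theta_cls_preimage:
  assumes "z \<in> vecs n1"
  obtains x where "x \<in> vecs n0" "\<theta> (cls n0 L0 x) = cls n1 L1 z"
proof -
  have "cls n1 L1 z \<in> \<theta> ` Cok n0 L0"
    using iso assms unfolding linking_iso_def bij_betw_def Cok_def by auto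
  then show thesis
    using that by (auto simp: Cok_def)
qed

lemma theta_cls_add:
  assumes "x \<in> vecs n0" "y \<in> vecs n0"
    and "\<theta> (cls n0 L0 x) = cls n1 L1 x1" "\<theta> (cls n0 L0 y) = cls n1 L1 y1"
  shows "\<theta> (cls n0 L0 (\<lambda>i. x i + y i)) = cls n1 L1 (\<lambda>i. x1 i + y1 i)"
  using iso assms cls_add[of n1 L1 x1 y1] unfolding linking_iso_def by simp

lemma theta_cls_zero: "\<theta> (cls n0 L0 (\<lambda>i. 0)) = cls n1 L1 (\<lambda>i. 0)"
proof -
  obtain z where z: "z \<in> vecs n1" "\<theta> (cls n0 L0 (\<lambda>i. 0)) = cls n1 L1 z"
    using theta_cls[of "\<lambda>i. 0"] by auto
  have "cls n1 L1 (\<lambda>i. z i + z i) = cls n1 L1 (\<lambda>i. z i + 0)"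
    using theta_cls_add[of "\<lambda>i. 0" "\<lambda>i. 0" z z] z by simp
  then have "cls n1 L1 z = cls n1 L1 (\<lambda>i. 0)"
    by (rule cls_add_cancel)
  then show ?thesis
    using z(2) by simp
qed

lemma theta_cls_uminus:
  assumes "x \<in> vecs n0" "\<theta> (cls n0 L0 x) = cls n1 L1 x1"
  shows "\<theta> (cls n0 L0 (\<lambda>i. - x i)) = cls n1 L1 (\<lambda>i. - x1 i)"
proof -
  obtain w where w: "w \<in> vecs n1" "\<theta> (cls n0 L0 (\<lambda>i. - x i)) = cls n1 L1 w"
    using theta_cls[of "\<lambda>i. - x i"] assms(1) by auto
  have "cls n1 L1 (\<lambda>i. x1 i + w i) = cls n1 L1 (\<lambda>i. x1 i + - x1 i)"
    using theta_cls_add[OF assms(1) _ assms(2) w(2)] assms(1) theta_cls_zero by simp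
  then have "cls n1 L1 w = cls n1 L1 (\<lambda>i. - x1 i)"
    by (rule cls_add_cancel)
  then show ?thesis
    using w(2) by simp
qed

lemma zero_in_H: "pzero \<in> H"
  using theta_cls_zero by (simp add: mem_H)

lemma padd_in_H: "x \<in> H \<Longrightarrow> y \<in> H \<Longrightarrow> padd x y \<in> H"
  using theta_cls_add by (simp add: mem_H padd_def)

lemma pneg_in_H: "x \<in> H \<Longrightarrow> pneg x \<in> H"
  using theta_cls_uminus by (simp add: mem_H pneg_def)

lemma pgroup_H: "pgroup H"
  using zero_in_H padd_in_H pneg_in_H by (simp add: pgroup_def)

definition qdiff :: "pvec \<Rightarrow> rat" where
  "qdiff p = qlift F n0 L0 a0 (fst p) - qlift F n1 L1 a1 (snd p)"

lemma qdiff_Ints: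
  assumes p: "p \<in> H"
  shows "qdiff p \<in> \<int>"
proof -
  have v: "fst p \<in> vecs n0" "snd p \<in> vecs n1" and th: "\<theta> (cls n0 L0 (fst p)) = cls n1 L1 (snd p)"
    using p by (auto simp: mem_H)
  have "cls n0 L0 (fst p) \<in> Cok n0 L0"
    using v(1) by (simp add: Cok_def)
  then have "qstar F n1 L1 a1 (cls n1 L1 (snd p)) = qstar F n0 L0 a0 (cls n0 L0 (fst p))"
    using iso th unfolding linking_iso_def by metis
  then have "frac (qlift F n0 L0 a0 (fst p)) = frac (qlift F n1 L1 a1 (snd p))"
    by (simp add: qstar_cls[OF q0 nd0 f0 v(1)] qstar_cls[OF q1 nd1 f1 v(2)])
  then show ?thesis
    unfolding qdiff_def using frac_diff_eq frac_eq_0_iff by blast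
qed

lemma qdiff_padd:
  assumes "x \<in> H" "y \<in> H"
  shows "qdiff (padd x y) = qdiff x + qdiff y + lam x y"
  using assms qlift_add[OF nd0 symm0, of "fst x" "fst y" F a0] qlift_add[OF nd1 symm1, of "snd x" "snd y" F a1]
  by (simp add: mem_H qdiff_def lam_eq padd_def)

lemma lam_Ints:
  assumes "x \<in> H" "y \<in> H"
  shows "lam x y \<in> \<int>"
proof -
  have "lam x y = qdiff (padd x y) - qdiff x - qdiff y"
    using qdiff_padd[OF assms] by simp
  then show ?thesis
    using qdiff_Ints padd_in_H assms by simp
qed

lemma lam_commute: "x \<in> H \<Longrightarrow> y \<in> H \<Longrightarrow> lam x y = lam y x"
  by (simp add: mem_H lam_eq linv_commute[OF nd0 symm0] linv_commute[OF nd1 symm1])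

lemma lam_padd_left: "x \<in> H \<Longrightarrow> y \<in> H \<Longrightarrow> lam (padd x y) z = lam x z + lam y z"
  by (simp add: mem_H lam_eq padd_def linv_add_left[OF nd0] linv_add_left[OF nd1])

lemma lam_psmult_right:
  "fst x \<in> vecs n0 \<Longrightarrow> snd x \<in> vecs n1 \<Longrightarrow> lam x (psmult c y) = of_int c * lam x y"
  by (simp add: lam_eq psmult_def linv_smult_right[OF nd0] linv_smult_right[OF nd1] algebra_simps)

lemma lam_emb_right:
  assumes "fst x \<in> vecs n0" "snd x \<in> vecs n1"
  shows "lam x (e w) = of_int (dot n0 (fst x) (fst w) + dot n1 (snd x) (snd w))"
  using assms
  by (simp add: lam_eq emb_eq linv_adj_right[OF nd0 symm0] linv_uminus_right[OF nd1]
      linv_adj_right[OF nd1 symm1])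

lemma emb_in_H:
  assumes "v \<in> vecs n0 \<times> vecs n1"
  shows "e v \<in> H"
proof -
  have "cls n0 L0 (adj n0 L0 (fst v)) = cls n0 L0 (\<lambda>i. 0)"
    unfolding cls_eq_iff using assms by (intro bexI[of _ "\<lambda>i. - fst v i"]) (auto simp: adj_uminus)
  moreover have "cls n1 L1 (\<lambda>i. - adj n1 L1 (snd v) i) = cls n1 L1 (\<lambda>i. 0)"
    unfolding cls_eq_iff using assms by (intro bexI[of _ "snd v"]) auto
  ultimately show ?thesis
    using theta_cls_zero by (simp add: mem_H emb_eq)
qed

lemma emb_padd: "e (padd v w) = padd (e v) (e w)"
  by (simp add: emb_eq padd_def adj_add)

lemma inj_on_emb: "inj_on e (vecs n0 \<times> vecs n1)"
proof (rule inj_onI)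
  fix v w
  assume vw: "v \<in> vecs n0 \<times> vecs n1" "w \<in> vecs n0 \<times> vecs n1" "e v = e w"
  then have "adj n0 L0 (fst v) = adj n0 L0 (fst w)" "adj n1 L1 (snd v) = adj n1 L1 (snd w)"
    by (auto simp: emb_eq fun_eq_iff)
  moreover have "fst v \<in> vecs n0" "fst w \<in> vecs n0" "snd v \<in> vecs n1" "snd w \<in> vecs n1"
    using vw(1,2) by auto
  ultimately have "fst v = fst w" "snd v = snd w"
    using nondeg_adj_eqD[OF nd0] nondeg_adj_eqD[OF nd1] by blast+
  then show "v = w"
    by (simp add: prod_eq_iff)
qed

lemma lam_emb_emb:
  assumes "v \<in> vecs n0 \<times> vecs n1"
  shows "lam (e v) (e w) = of_int (bil n0 L0 (fst v) (fst w) - bil n1 L1 (snd v) (snd w))"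
  using lam_emb_right[of "e v" w]
  by (simp add: emb_eq bil_eq_dot_adj dot_uminus_left dot_adj_commute[OF symm0, of "fst v"]
      dot_adj_commute[OF symm1, of "snd v"])

lemma smult_in_emb_image:
  assumes "y \<in> H"
  obtains r w where "r \<noteq> 0" "w \<in> vecs n0 \<times> vecs n1" "psmult r y = e w"
proof -
  have y: "fst y \<in> vecs n0" "snd y \<in> vecs n1"
    using assms by (auto simp: mem_H)
  obtain r0 v0 where v0: "r0 \<noteq> 0" "v0 \<in> vecs n0" "(\<lambda>i. r0 * fst y i) = adj n0 L0 v0"
    using nondeg_smult_in_adj_range[OF nd0 y(1)] .
  obtain r1 v1 where v1: "r1 \<noteq> 0" "v1 \<in> vecs n1" "(\<lambda>i. r1 * snd y i) = adj n1 L1 v1"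
    using nondeg_smult_in_adj_range[OF nd1 y(2)] .
  have "(\<lambda>i. r0 * r1 * fst y i) = adj n0 L0 (\<lambda>i. r1 * v0 i)"
    unfolding adj_smult v0(3)[symmetric] by (simp add: algebra_simps)
  moreover have "(\<lambda>i. r0 * r1 * snd y i) = (\<lambda>i. - adj n1 L1 (\<lambda>i. - (r0 * v1 i)) i)"
    unfolding adj_uminus adj_smult v1(3)[symmetric] by (simp add: algebra_simps)
  ultimately have "psmult (r0 * r1) y = e ((\<lambda>i. r1 * v0 i), (\<lambda>i. - (r0 * v1 i)))"
    by (simp add: psmult_def emb_eq)
  moreover have "((\<lambda>i. r1 * v0 i), (\<lambda>i. - (r0 * v1 i))) \<in> vecs n0 \<times> vecs n1"
    using v0(2) v1(2) by simp
  moreover have "r0 * r1 \<noteq> 0"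
    using v0(1) v1(1) by simp
  ultimately show thesis
    using that by blast
qed

lemma lam_emb_inj:
  assumes x: "fst x \<in> vecs n0" "snd x \<in> vecs n1" and x': "fst x' \<in> vecs n0" "snd x' \<in> vecs n1"
    and eq: "\<And>w. w \<in> vecs n0 \<times> vecs n1 \<Longrightarrow> lam x (e w) = lam x' (e w)"
  shows "x = x'"
proof -
  have "fst x j = fst x' j" for j
  proof (cases "j < n0")
    case True
    then show ?thesis
      using eq[of "(std_basis j, \<lambda>i. 0)"] by (simp add: lam_emb_right x x' dot_std_basis_right)
  next
    case False
    then show ?thesis
      using x(1) x'(1) by (simp add: vecs_def)
  qed
  moreover have "snd x j = snd x' j" for j
  proof (cases "j < n1")
    case True
    then show ?thesis
      using eq[of "(\<lambda>i. 0, std_basis j)"] by (simp add: lam_emb_right x x' dot_std_basis_right)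
  next
    case False
    then show ?thesis
      using x(2) x'(2) by (simp add: vecs_def)
  qed
  ultimately show ?thesis
    by (simp add: prod_eq_iff fun_eq_iff)
qed

text \<open>Compare x with (fst x, z1) \<in> H, where theta [fst x] = [z1]: the difference (0, z1 - snd x)
  pairs integrally with the elements (y0, e_j) of H that exist by surjectivity of theta.\<close>

lemma Ints_lam_imp_in_H:
  assumes x: "fst x \<in> vecs n0" "snd x \<in> vecs n1" and ints: "\<And>y. y \<in> H \<Longrightarrow> lam x y \<in> \<int>"
  shows "x \<in> H"
proof -
  obtain z1 where z1: "z1 \<in> vecs n1" "\<theta> (cls n0 L0 (fst x)) = cls n1 L1 z1"
    using theta_cls[OF x(1)] .
  have xz: "(fst x, z1) \<in> H"
    using x z1 by (simp add: mem_H)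
  have "linv n1 L1 (\<lambda>i. z1 i - snd x i) (std_basis j) \<in> \<int>" if j: "j < n1" for j
  proof -
    obtain y0 where y0: "y0 \<in> vecs n0" "\<theta> (cls n0 L0 y0) = cls n1 L1 (std_basis j)"
      using theta_cls_preimage[of "std_basis j"] j by auto
    have yH: "(y0, std_basis j) \<in> H"
      using y0 j by (simp add: mem_H)
    have "linv n1 L1 (\<lambda>i. z1 i - snd x i) (std_basis j)
        = lam x (y0, std_basis j) - lam (fst x, z1) (y0, std_basis j)"
      by (simp add: lam_eq linv_diff_left[OF nd1 z1(1) x(2)])
    then show ?thesis
      using ints[OF yH] lam_Ints[OF xz yH] by simp
  qed
  then obtain u where u: "u \<in> vecs n1" "(\<lambda>i. z1 i - snd x i) = adj n1 L1 u"
    using linv_Ints_imp_in_adj_range[OF nd1 diff_in_vecs[OF z1(1) x(2)]] by metis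
  have "snd x = (\<lambda>i. z1 i + adj n1 L1 (\<lambda>i. - u i) i)"
  proof
    fix i
    have "z1 i - snd x i = adj n1 L1 u i"
      using fun_cong[OF u(2), of i] by simp
    then show "snd x i = z1 i + adj n1 L1 (\<lambda>i. - u i) i"
      by (simp add: adj_uminus)
  qed
  then have "cls n1 L1 z1 = cls n1 L1 (snd x)"
    unfolding cls_eq_iff using u(1) by auto
  then show ?thesis
    using x z1 by (simp add: mem_H)
qed

lemma additive_on_H_eq_lam:
  assumes f: "additive_on H f"
  obtains x where "x \<in> H" "\<And>y. y \<in> H \<Longrightarrow> of_int (f y) = lam x y"
proof -
  define g0 where "g0 v = f (e (v, \<lambda>i. 0))" for v
  define g1 where "g1 v = f (e (\<lambda>i. 0, v))" for v
  define x where "x = (dual_vec n0 g0, dual_vec n1 g1)"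
  have x_vecs: "fst x \<in> vecs n0" "snd x \<in> vecs n1"
    by (simp_all add: x_def)
  have f_emb: "f (e (padd v w)) = f (e v) + f (e w)"
    if "v \<in> vecs n0 \<times> vecs n1" "w \<in> vecs n0 \<times> vecs n1" for v w
    using f emb_in_H[OF that(1)] emb_in_H[OF that(2)] unfolding emb_padd additive_on_def by blast
  have g0: "g0 v = dot n0 (fst x) v" if "v \<in> vecs n0" for v
    unfolding x_def fst_conv
  proof (rule additive_on_vecs_eq_dot[OF _ that])
    fix v w :: "nat \<Rightarrow> int"
    assume "v \<in> vecs n0" "w \<in> vecs n0"
    then show "g0 (\<lambda>i. v i + w i) = g0 v + g0 w"
      using f_emb[of "(v, \<lambda>i. 0)" "(w, \<lambda>i. 0)"] by (simp add: g0_def padd_def)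
  qed
  have g1: "g1 v = dot n1 (snd x) v" if "v \<in> vecs n1" for v
    unfolding x_def snd_conv
  proof (rule additive_on_vecs_eq_dot[OF _ that])
    fix v w :: "nat \<Rightarrow> int"
    assume "v \<in> vecs n1" "w \<in> vecs n1"
    then show "g1 (\<lambda>i. v i + w i) = g1 v + g1 w"
      using f_emb[of "(\<lambda>i. 0, v)" "(\<lambda>i. 0, w)"] by (simp add: g1_def padd_def)
  qed
  have f_lam_emb: "of_int (f (e w)) = lam x (e w)" if w: "w \<in> vecs n0 \<times> vecs n1" for w
  proof -
    have "padd (fst w, \<lambda>i. 0) (\<lambda>i. 0, snd w) = w"
      by (simp add: padd_def)
    then have "f (e w) = g0 (fst w) + g1 (snd w)"
      using f_emb[of "(fst w, \<lambda>i. 0)" "(\<lambda>i. 0, snd w)"] w by (simp add: g0_def g1_def mem_Times_iff)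
    then show ?thesis
      using w g0 g1 by (simp add: lam_emb_right x_vecs mem_Times_iff)
  qed
  have f_lam: "of_int (f y) = lam x y" if y: "y \<in> H" for y
  proof -
    obtain r w where rw: "r \<noteq> 0" "w \<in> vecs n0 \<times> vecs n1" "psmult r y = e w"
      using smult_in_emb_image[OF y] .
    have "of_int r * of_int (f y) = of_int (f (psmult r y))"
      using additive_on_psmult[OF pgroup_H f y] by simp
    also have "\<dots> = lam x (psmult r y)"
      using f_lam_emb[OF rw(2)] rw(3) by simp
    also have "\<dots> = of_int r * lam x y"
      by (rule lam_psmult_right[OF x_vecs])
    finally show ?thesis
      using rw(1) by simp
  qed
  moreover have "x \<in> H"
    using x_vecs by (rule Ints_lam_imp_in_H) (metis f_lam Ints_of_int)
  ultimately show thesis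
    using that by blast
qed

lemma lam_nonsingular:
  assumes "additive_on H f"
  shows "\<exists>!x. x \<in> H \<and> (\<forall>y\<in>H. of_int (f y) = lam x y)"
proof -
  obtain x where x: "x \<in> H" "\<And>y. y \<in> H \<Longrightarrow> of_int (f y) = lam x y"
    using additive_on_H_eq_lam[OF assms] by blast
  show ?thesis
  proof (rule ex1I[of _ x])
    show "x \<in> H \<and> (\<forall>y\<in>H. of_int (f y) = lam x y)"
      using x by blast
  next
    fix x'
    assume x': "x' \<in> H \<and> (\<forall>y\<in>H. of_int (f y) = lam x' y)"
    show "x' = x"
      by (rule lam_emb_inj) (use x x' emb_in_H in \<open>auto simp: mem_H\<close>)
  qed
qed

lemma free_fg_H: "free_fg H"
proof (rule pgroup_free_fg[OF pgroup_H, where \<phi> = "\<lambda>j p. if j < n0 then fst p j else snd p (j - n0)"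
      and m = "n0 + n1"])
  show "\<forall>j<n0 + n1. additive_on H (\<lambda>p. if j < n0 then fst p j else snd p (j - n0))"
    by (simp add: additive_on_def padd_def)
  show "\<forall>g\<in>H. (\<forall>j<n0 + n1. (if j < n0 then fst g j else snd g (j - n0)) = 0) \<longrightarrow> g = pzero"
  proof (intro ballI impI)
    fix g
    assume g: "g \<in> H" and zero: "\<forall>j<n0 + n1. (if j < n0 then fst g j else snd g (j - n0)) = 0"
    have "fst g j = 0" for j
      using zero[rule_format, of j] g by (cases "j < n0") (auto simp: mem_H vecs_def)
    moreover have "snd g j = 0" for j
      using zero[rule_format, of "n0 + j"] g by (cases "j < n1") (auto simp: mem_H vecs_def)
    ultimately show "g = pzero"
      by (simp add: prod_eq_iff fun_eq_iff)
  qed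
qed

lemma a_in_H: "(a0, a1) \<in> H"
  using iso a0_in_vecs a1_in_vecs by (simp add: mem_H linking_iso_def)

lemma lam_quadratic_eq_qdiff:
  assumes "v \<in> H"
  shows "lam v v + (if F = Fc then lam (a0, a1) v else 0) = 2 * qdiff v"
  using assms linv_commute[OF nd0 symm0 a0_in_vecs, of "fst v"] linv_commute[OF nd1 symm1 a1_in_vecs, of "snd v"]
  by (simp add: mem_H qdiff_def qlift_def lam_eq field_simps)

lemma in_famQ_H: "in_famQ F H lam (\<lambda>v. lam (a0, a1) v)"
proof -
  have half_Ints: "(lam v v + (if F = Fc then lam (a0, a1) v else 0)) / 2 \<in> \<int>" if "v \<in> H" for v
    using lam_quadratic_eq_qdiff[OF that] qdiff_Ints[OF that] by simp
  show ?thesis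
  proof (cases F)
    case Fo
    then have "a0 = (\<lambda>i. 0)" "a1 = (\<lambda>i. 0)"
      using f0 f1 by (auto simp: in_fam_def fun_eq_iff)
    then have "lam (a0, a1) v = 0" for v
      by (simp add: lam_eq linv_zero_left[OF nd0] linv_zero_left[OF nd1])
    then show ?thesis
      using half_Ints Fo by (simp add: in_famQ_def)
  qed (use half_Ints in \<open>simp_all add: in_famQ_def\<close>)
qed

lemma lam_emb_quadratic:
  assumes "v \<in> vecs n0 \<times> vecs n1"
  shows "lam (e v) (e v) + lam (a0, a1) (e v)
    = of_int ((bil n0 L0 (fst v) (fst v) + dot n0 a0 (fst v)) + (- bil n1 L1 (snd v) (snd v) + dot n1 a1 (snd v)))"
  using assms lam_emb_emb[OF assms, of v] lam_emb_right[of "(a0, a1)" v] a0_in_vecs a1_in_vecs by simp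

end

theorem lemma1p1:
  fixes F :: family
    and n0 n1 :: nat
    and L0 L1 :: "nat \<Rightarrow> nat \<Rightarrow> int"
    and a0 a1 :: "nat \<Rightarrow> int"
    and \<theta> :: "(nat \<Rightarrow> int) set \<Rightarrow> (nat \<Rightarrow> int) set"
  assumes q0: "quadfun n0 L0 a0" and q1: "quadfun n1 L1 a1"
    and nd0: "nondeg n0 L0" and nd1: "nondeg n1 L1"
    and f0: "in_fam F n0 L0 a0" and f1: "in_fam F n1 L1 a1"
    and iso: "linking_iso F n0 L0 a0 n1 L1 a1 \<theta>"
  defines "H \<equiv> glueH n0 L0 n1 L1 \<theta>"
    and "lam \<equiv> glue_lam n0 L0 n1 L1"
    and "e \<equiv> emb n0 L0 n1 L1"
  shows
    "(((\<lambda>i. 0), (\<lambda>i. 0)) \<in> H \<and> (\<forall>x\<in>H. \<forall>y\<in>H. padd x y \<in> H) \<and> (\<forall>x\<in>H. pneg x \<in> H)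
     \<and> free_fg H
     \<and> (\<forall>x\<in>H. \<forall>y\<in>H. lam x y \<in> \<int>)
     \<and> (\<forall>x\<in>H. \<forall>y\<in>H. lam x y = lam y x)
     \<and> (\<forall>x\<in>H. \<forall>y\<in>H. \<forall>z\<in>H. lam (padd x y) z = lam x z + lam y z)
     \<and> (\<forall>f :: pvec \<Rightarrow> int. (\<forall>x\<in>H. \<forall>y\<in>H. f (padd x y) = f x + f y)
            \<longrightarrow> (\<exists>!x. x \<in> H \<and> (\<forall>y\<in>H. of_int (f y) = lam x y))))
    \<and>
    ((\<forall>v\<in>vecs n0 \<times> vecs n1. e v \<in> H)
     \<and> inj_on e (vecs n0 \<times> vecs n1)
     \<and> (\<forall>v\<in>vecs n0 \<times> vecs n1. \<forall>w\<in>vecs n0 \<times> vecs n1. e (padd v w) = padd (e v) (e w))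
     \<and> (\<forall>v\<in>vecs n0 \<times> vecs n1. \<forall>w\<in>vecs n0 \<times> vecs n1.
          lam (e v) (e w) = of_int (bil n0 L0 (fst v) (fst w) - bil n1 L1 (snd v) (snd w))))
    \<and>
    ((a0, a1) \<in> H)
    \<and>
    (in_famQ F H lam (\<lambda>v. lam (a0, a1) v))
    \<and>
    (\<forall>v\<in>vecs n0 \<times> vecs n1.
        lam (e v) (e v) + lam (a0, a1) (e v)
          = of_int ((bil n0 L0 (fst v) (fst v) + dot n0 a0 (fst v))
                    + (- bil n1 L1 (snd v) (snd v) + dot n1 a1 (snd v))))"
proof -
  interpret G: gluing F n0 L0 a0 n1 L1 a1 \<theta>
    using q0 q1 nd0 nd1 f0 f1 iso by unfold_locales
  show ?thesis
    unfolding H_def lam_def e_def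
    by (intro conjI ballI allI impI)
      (assumption | rule G.zero_in_H G.padd_in_H G.pneg_in_H G.free_fg_H G.lam_Ints G.lam_commute
        G.lam_padd_left G.lam_nonsingular[unfolded additive_on_def] G.emb_in_H G.inj_on_emb
        G.emb_padd G.lam_emb_emb G.a_in_H G.in_famQ_H G.lam_emb_quadratic)+
qed

end
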